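(* Let $E$ be a closed term with $\vdash E:(\neg X\to X)\to X$, where $X$ is a propositional variable. Then for each $\lambda$-variable $x$, each finite sequence of $\lambda$-variables $\bar y$, and each sequence of $\lambda$-variables $(z_i)_{i\in\mathbb N^*}$ such that $x$ and the variables of $\bar y$ are different from every $z_i$, there exist $m\in\mathbb N^*$ and terms $\theta_1,\dots,\theta_m$ such that: $(E\;x)\;\bar y\triangleright^*\underline{\mu}.((x\;\theta_1)\;\bar y)$; $(\theta_k\;z_k)\triangleright^*\underline{\mu}.((x\;\theta_{k+1})\;\bar y)$ for all $1\le k\le m-1$; and $(\theta_m\;z_m)\triangleright^*\underline{\mu}.(z_l\;\bar y)$ for some $1\le l\le m$.
   Context: $\lambda\mu$-terms: $t::= x\mid \lambda x.t\mid (t\;t)\mid \mu a.t\mid (a\;t)$ over disjoint infinite sets of $\lambda$-variables and $\mu$-variables; types built from propositional variables and $\perp$ with $\to$; $\neg A$ denotes $A\to\perp$. Reduction $(\lambda x.u\;v)\triangleright u[x:=v]$, $(\mu a.u\;v)\triangleright\mu a.u[a:=^*v]$ ($u[a:=^*v]$ replaces each subterm $(a\;w)$ of $u$ by $(a\;(w\;v))$), $\triangleright^*$ its reflexive transitive compatible closure. Typing rules: (ax) $\Gamma\vdash x:A;\Delta$ if $x:A\in\Gamma$; ($\to_i$) from $\Gamma,x:A\vdash t:B;\Delta$ infer $\Gamma\vdash\lambda x.t:A\to B;\Delta$; ($\to_e$) from $\Gamma\vdash u:A\to B;\Delta$, $\Gamma\vdash v:A;\Delta$ infer $\Gamma\vdash(u\;v):B;\Delta$;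 ($\mu$) from $\Gamma\vdash t:\perp;\Delta,a:A$ infer $\Gamma\vdash\mu a.t:A;\Delta$; ($\perp$) from $\Gamma\vdash t:A;\Delta,a:A$ infer $\Gamma\vdash(a\;t):\perp;\Delta,a:A$; $\vdash$ means empty contexts. For a sequence $\bar y=y_1\dots y_n$, $t\;\bar y=((t\;y_1)\dots y_n)$. For a term $t$, $M_t$ is the smallest set containing $t$ such that $w\in M_t$ and $a$ a $\mu$-variable imply $\mu a.w\in M_t$ and $(a\;w)\in M_t$; $\underline{\mu}.t$ denotes an arbitrary element of $M_t$ (different occurrences may denote different elements). *)

theory Defs
  imports Main
begin

text \<open>Lambda-mu terms in de Bruijn representation with two independent index spaces:
  lambda-variables (Var i, bound by Lam) and mu-variables (the index a in Nam a t, bound by Mu).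
  Free variables are the indices that exceed the number of enclosing binders of their kind;
  a free variable "named" n at top level is the index n.
  Nam a t represents the named term (a t).\<close>

datatype trm = Var nat | Lam trm | App trm trm | Mu trm | Nam nat trm

datatype ty = PV nat | Bot | Arr ty ty

definition neg :: "ty \<Rightarrow> ty" where "neg A = Arr A Bot"

fun lift_l :: "nat \<Rightarrow> trm \<Rightarrow> trm" where
  "lift_l k (Var i) = (if i < k then Var i else Var (Suc i))"
| "lift_l k (Lam t) = Lam (lift_l (Suc k) t)"
| "lift_l k (App t u) = App (lift_l k t) (lift_l k u)"
| "lift_l k (Mu t) = Mu (lift_l k t)"
| "lift_l k (Nam a t) = Nam a (lift_l k t)"

fun lift_m :: "nat \<Rightarrow> trm \<Rightarrow> trm" where
  "lift_m k (Var i) = Var i"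
| "lift_m k (Lam t) = Lam (lift_m k t)"
| "lift_m k (App t u) = App (lift_m k t) (lift_m k u)"
| "lift_m k (Mu t) = Mu (lift_m (Suc k) t)"
| "lift_m k (Nam a t) = Nam (if a < k then a else Suc a) (lift_m k t)"

fun subst_l :: "trm \<Rightarrow> nat \<Rightarrow> trm \<Rightarrow> trm" where
  "subst_l (Var i) k s = (if i < k then Var i else if i = k then s else Var (i - 1))"
| "subst_l (Lam t) k s = Lam (subst_l t (Suc k) (lift_l 0 s))"
| "subst_l (App t u) k s = App (subst_l t k s) (subst_l u k s)"
| "subst_l (Mu t) k s = Mu (subst_l t k (lift_m 0 s))"
| "subst_l (Nam a t) k s = Nam a (subst_l t k s)"

fun subst_m :: "trm \<Rightarrow> nat \<Rightarrow> trm \<Rightarrow> trm" where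
  "subst_m (Var i) k v = Var i"
| "subst_m (Lam t) k v = Lam (subst_m t k (lift_l 0 v))"
| "subst_m (App t u) k v = App (subst_m t k v) (subst_m u k v)"
| "subst_m (Mu t) k v = Mu (subst_m t (Suc k) (lift_m 0 v))"
| "subst_m (Nam a t) k v =
     (if a = k then Nam a (App (subst_m t k v) v) else Nam a (subst_m t k v))"

inductive red1 :: "trm \<Rightarrow> trm \<Rightarrow> bool" where
  beta: "red1 (App (Lam u) v) (subst_l u 0 v)"
| mu: "red1 (App (Mu u) v) (Mu (subst_m u 0 (lift_m 0 v)))"
| lam: "red1 t t' \<Longrightarrow> red1 (Lam t) (Lam t')"
| appL: "red1 t t' \<Longrightarrow> red1 (App t u) (App t' u)"
| appR: "red1 u u' \<Longrightarrow> red1 (App t u) (App t u')"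
| muC: "red1 t t' \<Longrightarrow> red1 (Mu t) (Mu t')"
| nam: "red1 t t' \<Longrightarrow> red1 (Nam a t) (Nam a t')"

definition red :: "trm \<Rightarrow> trm \<Rightarrow> bool" where "red = red1\<^sup>*\<^sup>*"

text \<open>Typing; Gamma and Delta are lists indexed by de Bruijn index (head = innermost binder).\<close>
inductive typing :: "ty list \<Rightarrow> ty list \<Rightarrow> trm \<Rightarrow> ty \<Rightarrow> bool" where
  ax: "i < length \<Gamma> \<Longrightarrow> typing \<Gamma> \<Delta> (Var i) (\<Gamma> ! i)"
| arr_i: "typing (A # \<Gamma>) \<Delta> t B \<Longrightarrow> typing \<Gamma> \<Delta> (Lam t) (Arr A B)"
| arr_e: "typing \<Gamma> \<Delta> u (Arr A B) \<Longrightarrow> typing \<Gamma> \<Delta> v A \<Longrightarrow> typing \<Gamma> \<Delta> (App u v) B"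
| mu_i: "typing \<Gamma> (A # \<Delta>) t Bot \<Longrightarrow> typing \<Gamma> \<Delta> (Mu t) A"
| bot_i: "a < length \<Delta> \<Longrightarrow> typing \<Gamma> \<Delta> t (\<Delta> ! a) \<Longrightarrow> typing \<Gamma> \<Delta> (Nam a t) Bot"

fun lclosed :: "nat \<Rightarrow> trm \<Rightarrow> bool" where
  "lclosed k (Var i) = (i < k)"
| "lclosed k (Lam t) = lclosed (Suc k) t"
| "lclosed k (App t u) = (lclosed k t \<and> lclosed k u)"
| "lclosed k (Mu t) = lclosed k t"
| "lclosed k (Nam a t) = lclosed k t"

fun mclosed :: "nat \<Rightarrow> trm \<Rightarrow> bool" where
  "mclosed k (Var i) = True"
| "mclosed k (Lam t) = mclosed k t"
| "mclosed k (App t u) = (mclosed k t \<and> mclosed k u)"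
| "mclosed k (Mu t) = mclosed (Suc k) t"
| "mclosed k (Nam a t) = (a < k \<and> mclosed k t)"

definition closed :: "trm \<Rightarrow> bool" where "closed t = (lclosed 0 t \<and> mclosed 0 t)"

text \<open>mu_bind a d t: abstracts the free mu-variable a of t (at binder depth d), so that
  Mu (mu_bind a 0 t) represents the named term (mu a. t).\<close>
fun mu_bind :: "nat \<Rightarrow> nat \<Rightarrow> trm \<Rightarrow> trm" where
  "mu_bind a d (Var i) = Var i"
| "mu_bind a d (Lam t) = Lam (mu_bind a d t)"
| "mu_bind a d (App t u) = App (mu_bind a d t) (mu_bind a d u)"
| "mu_bind a d (Mu t) = Mu (mu_bind a (Suc d) t)"
| "mu_bind a d (Nam b t) =
     Nam (if b < d then b else if b - d = a then d else Suc b) (mu_bind a d t)"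

inductive_set Mset :: "trm \<Rightarrow> trm set" for t where
  base: "t \<in> Mset t"
| mu_w: "w \<in> Mset t \<Longrightarrow> Mu (mu_bind a 0 w) \<in> Mset t"
| nam_w: "w \<in> Mset t \<Longrightarrow> Nam a w \<in> Mset t"

text \<open>t reduces to some element of M_u  (t |>* mu.u).\<close>
definition red_mu :: "trm \<Rightarrow> trm \<Rightarrow> bool" where
  "red_mu t u = (\<exists>w \<in> Mset u. red t w)"

definition apps :: "trm \<Rightarrow> nat list \<Rightarrow> trm" where
  "apps t ys = foldl (\<lambda>s y. App s (Var y)) t ys"

end

theory Submission
  imports Defs
begin

text \<open>
  A Krivine-style semantics with a pole that records the interaction with \<open>x\<close>. Call a term
  \<open>w\<close> good at round \<open>n\<close> if \<open>w \<triangleright>* \<mu>.(z\<^sub>l y\<^sub>1\<dots>y\<^sub>k)\<close> for some \<open>1 \<le> l \<le> n\<close>, or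
  \<open>w \<triangleright>* \<mu>.((x \<theta>) y\<^sub>1\<dots>y\<^sub>k)\<close> with \<open>(\<theta> z\<^sub>n\<^sub>+\<^sub>1)\<close> good at round \<open>n + 1\<close> (inductively, so every
  witness of goodness is a finite play). Taking as pole at round \<open>n\<close> the terms good at all
  rounds \<open>\<ge> n\<close>, interpreting \<open>X\<close> by the terms \<open>t\<close> with \<open>t y\<^sub>1\<dots>y\<^sub>k\<close> in the pole and arrows
  Kripke-style over rounds, every typed term realizes its type (adequacy), and \<open>x\<close> realizes
  \<open>\<not>X \<rightarrow> X\<close> because \<open>z\<^sub>n\<^sub>+\<^sub>1\<close> realizes \<open>X\<close> at round \<open>n + 1\<close>. Hence \<open>(E x) y\<^sub>1\<dots>y\<^sub>k\<close> is good
  at round 0, and unfolding that finite derivation yields \<open>\<theta>\<^sub>1, \<dots>, \<theta>\<^sub>m\<close>.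
\<close>

section \<open>Renaming and simultaneous substitution\<close>

definition shift_ren :: "(nat \<Rightarrow> nat) \<Rightarrow> nat \<Rightarrow> nat" where
  "shift_ren r i = (case i of 0 \<Rightarrow> 0 | Suc j \<Rightarrow> Suc (r j))"

lemma shift_ren_simps [simp]: "shift_ren r 0 = 0" "shift_ren r (Suc j) = Suc (r j)"
  by (simp_all add: shift_ren_def)

lemma shift_ren_eq_0_iff [simp]: "shift_ren r a = 0 \<longleftrightarrow> a = 0"
  by (simp add: shift_ren_def split: nat.split)

lemma shift_ren_id [simp]: "shift_ren (\<lambda>a. a) = (\<lambda>a. a)"
  by (rule ext) (simp add: shift_ren_def split: nat.split)

lemma shift_ren_comp: "(\<lambda>i. shift_ren r2 (shift_ren r1 i)) = shift_ren (\<lambda>i. r2 (r1 i))"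
  by (rule ext) (simp add: shift_ren_def split: nat.split)

fun rename :: "(nat \<Rightarrow> nat) \<Rightarrow> (nat \<Rightarrow> nat) \<Rightarrow> trm \<Rightarrow> trm" where
  "rename r g (Var i) = Var (r i)"
| "rename r g (Lam t) = Lam (rename (shift_ren r) g t)"
| "rename r g (App t u) = App (rename r g t) (rename r g u)"
| "rename r g (Mu t) = Mu (rename r (shift_ren g) t)"
| "rename r g (Nam a t) = Nam (g a) (rename r g t)"

lemma rename_rename:
  "rename r2 g2 (rename r1 g1 t) = rename (\<lambda>i. r2 (r1 i)) (\<lambda>a. g2 (g1 a)) t"
  by (induction t arbitrary: r1 g1 r2 g2) (simp_all add: shift_ren_comp)

lemma rename_id [simp]: "rename (\<lambda>a. a) (\<lambda>a. a) t = t"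
  by (induction t) simp_all

definition app_list :: "trm \<Rightarrow> trm list \<Rightarrow> trm" where
  "app_list t us = foldl App t us"

lemma app_list_simps [simp]:
  "app_list t [] = t" "app_list t (u # us) = app_list (App t u) us"
  "app_list t (us @ vs) = app_list (app_list t us) vs"
  by (simp_all add: app_list_def)

lemma apps_eq_app_list: "apps t ys = app_list t (map Var ys)"
  by (simp add: apps_def app_list_def foldl_map)

lemma rename_app_list: "rename r g (app_list t us) = app_list (rename r g t) (map (rename r g) us)"
  by (induction us arbitrary: t) simp_all

definition shift_lsub :: "(nat \<Rightarrow> trm) \<Rightarrow> nat \<Rightarrow> trm" where
  "shift_lsub s i = (case i of 0 \<Rightarrow> Var 0 | Suc j \<Rightarrow> rename Suc (\<lambda>a. a) (s j))"

lemma shift_lsub_simps [simp]: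
  "shift_lsub s 0 = Var 0" "shift_lsub s (Suc j) = rename Suc (\<lambda>a. a) (s j)"
  by (simp_all add: shift_lsub_def)

definition shift_stacks :: "(nat \<Rightarrow> trm list) \<Rightarrow> nat \<Rightarrow> trm list" where
  "shift_stacks p a = map (rename (\<lambda>i. i) Suc) (case a of 0 \<Rightarrow> [] | Suc b \<Rightarrow> p b)"

lemma shift_stacks_simps [simp]:
  "shift_stacks p 0 = []" "shift_stacks p (Suc b) = map (rename (\<lambda>i. i) Suc) (p b)"
  by (simp_all add: shift_stacks_def)

lemma shift_stacks_eq: "shift_stacks p = (\<lambda>a. map (rename (\<lambda>i. i) Suc) (case_nat [] p a))"
  by (rule ext) (simp add: shift_stacks_def)

lemma shift_stacks_Nil [simp]: "shift_stacks (\<lambda>_. []) = (\<lambda>_. [])"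
  by (rule ext) (simp add: shift_stacks_def split: nat.split)

text \<open>
  Simultaneous substitution for \<open>\<lambda>\<close>-variables, renaming of \<open>\<mu>\<close>-variables and appending of
  stacks to named terms subsumes \<open>rename\<close>, \<open>subst_l\<close>, \<open>subst_m\<close> and \<open>mu_bind\<close>, and is closed
  under composition (\<open>psubst_psubst\<close>); every substitution identity below reduces to an
  equation between parameters.
\<close>

fun psubst :: "(nat \<Rightarrow> trm) \<Rightarrow> (nat \<Rightarrow> nat) \<Rightarrow> (nat \<Rightarrow> trm list) \<Rightarrow> trm \<Rightarrow> trm" where
  "psubst s f p (Var i) = s i"
| "psubst s f p (Lam t) = Lam (psubst (shift_lsub s) f (\<lambda>a. map (rename Suc (\<lambda>a. a)) (p a)) t)"
| "psubst s f p (App t u) = App (psubst s f p t) (psubst s f p u)"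
| "psubst s f p (Mu t) =
     Mu (psubst (\<lambda>i. rename (\<lambda>i. i) Suc (s i)) (shift_ren f) (shift_stacks p) t)"
| "psubst s f p (Nam a t) = Nam (f a) (app_list (psubst s f p t) (p a))"

lemma psubst_app_list:
  "psubst s f p (app_list t us) = app_list (psubst s f p t) (map (psubst s f p) us)"
  by (induction us arbitrary: t) simp_all

lemma rename_eq_psubst: "rename r g t = psubst (\<lambda>i. Var (r i)) g (\<lambda>_. []) t"
proof (induction t arbitrary: r g)
  case (Lam t)
  have "shift_lsub (\<lambda>i. Var (r i)) = (\<lambda>i. Var (shift_ren r i))"
    by (rule ext) (simp add: shift_lsub_def split: nat.split)
  then show ?case using Lam by simp
qed simp_all

lemma psubst_Var: "psubst Var (\<lambda>a. a) (\<lambda>_. []) t = t"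
  using rename_eq_psubst[of "\<lambda>a. a" "\<lambda>a. a" t] by simp

lemma psubst_rename:
  "psubst s f p (rename r g t) = psubst (\<lambda>i. s (r i)) (\<lambda>a. f (g a)) (\<lambda>a. p (g a)) t"
proof (induction t arbitrary: s f p r g)
  case (Lam t)
  have "(\<lambda>i. shift_lsub s (shift_ren r i)) = shift_lsub (\<lambda>i. s (r i))"
    by (rule ext) (simp add: shift_lsub_def split: nat.split)
  then show ?case using Lam by simp
next
  case (Mu t)
  have "(\<lambda>a. shift_stacks p (shift_ren g a)) = shift_stacks (\<lambda>a. p (g a))"
    by (rule ext) (simp add: shift_stacks_def split: nat.split)
  then show ?case using Mu by (simp add: shift_ren_comp)
qed simp_all

lemma rename_psubst:
  "rename r g (psubst s f p t) =
     psubst (\<lambda>i. rename r g (s i)) (\<lambda>a. g (f a)) (\<lambda>a. map (rename r g) (p a)) t"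
proof (induction t arbitrary: s f p r g)
  case (Lam t)
  have "(\<lambda>i. rename (shift_ren r) g (shift_lsub s i)) = shift_lsub (\<lambda>i. rename r g (s i))"
    by (rule ext) (simp add: shift_lsub_def rename_rename split: nat.split)
  then show ?case using Lam by (simp add: rename_rename comp_def)
next
  case (Mu t)
  have "(\<lambda>a. map (rename r (shift_ren g)) (shift_stacks p a)) =
      shift_stacks (\<lambda>a. map (rename r g) (p a))"
    by (rule ext) (simp add: shift_stacks_def rename_rename split: nat.split)
  then show ?case using Mu by (simp add: rename_rename shift_ren_comp)
qed (simp_all add: rename_app_list)

lemma psubst_psubst:
  "psubst s2 f2 p2 (psubst s1 f1 p1 t) =
     psubst (\<lambda>i. psubst s2 f2 p2 (s1 i)) (\<lambda>a. f2 (f1 a))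
       (\<lambda>a. map (psubst s2 f2 p2) (p1 a) @ p2 (f1 a)) t"
proof (induction t arbitrary: s1 f1 p1 s2 f2 p2)
  case (Lam t)
  have shift: "psubst (shift_lsub s2) f2 (\<lambda>a. map (rename Suc (\<lambda>a. a)) (p2 a)) (rename Suc (\<lambda>a. a) u)
      = rename Suc (\<lambda>a. a) (psubst s2 f2 p2 u)" for u
    by (simp add: psubst_rename rename_psubst)
  have "(\<lambda>i. psubst (shift_lsub s2) f2 (\<lambda>a. map (rename Suc (\<lambda>a. a)) (p2 a)) (shift_lsub s1 i)) =
      shift_lsub (\<lambda>i. psubst s2 f2 p2 (s1 i))"
    by (rule ext) (simp add: shift_lsub_def shift split: nat.split)
  then show ?case using Lam by (simp add: shift comp_def)
next
  case (Mu t)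
  have shift: "psubst (\<lambda>i. rename (\<lambda>i. i) Suc (s2 i)) (shift_ren f2) (shift_stacks p2)
      (rename (\<lambda>i. i) Suc u) = rename (\<lambda>i. i) Suc (psubst s2 f2 p2 u)" for u
    by (simp add: psubst_rename rename_psubst)
  have "(\<lambda>a. map (psubst (\<lambda>i. rename (\<lambda>i. i) Suc (s2 i)) (shift_ren f2) (shift_stacks p2))
        (shift_stacks p1 a) @ shift_stacks p2 (shift_ren f1 a)) =
      shift_stacks (\<lambda>a. map (psubst s2 f2 p2) (p1 a) @ p2 (f1 a))"
    by (rule ext) (simp add: shift_stacks_def shift_ren_def shift split: nat.split)
  then show ?case using Mu by (simp add: shift shift_ren_comp)
qed (simp_all add: psubst_app_list)

lemma lift_l_eq_rename: "lift_l k t = rename (\<lambda>i. if i < k then i else Suc i) (\<lambda>a. a) t"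
proof (induction t arbitrary: k)
  case (Lam t)
  have "shift_ren (\<lambda>i. if i < k then i else Suc i) = (\<lambda>i. if i < Suc k then i else Suc i)"
    by (rule ext) (simp add: shift_ren_def split: nat.split)
  then show ?case using Lam by simp
qed simp_all

lemma lift_m_eq_rename: "lift_m k t = rename (\<lambda>i. i) (\<lambda>a. if a < k then a else Suc a) t"
proof (induction t arbitrary: k)
  case (Mu t)
  have "shift_ren (\<lambda>i. if i < k then i else Suc i) = (\<lambda>i. if i < Suc k then i else Suc i)"
    by (rule ext) (simp add: shift_ren_def split: nat.split)
  then show ?case using Mu by simp
qed simp_all

lemma lift_l_0: "lift_l 0 t = rename Suc (\<lambda>a. a) t"
  by (simp add: lift_l_eq_rename)

lemma lift_m_0: "lift_m 0 t = rename (\<lambda>i. i) Suc t"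
  by (simp add: lift_m_eq_rename)

lemma subst_l_eq_psubst:
  "subst_l t k s =
     psubst (\<lambda>i. if i < k then Var i else if i = k then s else Var (i - 1)) (\<lambda>a. a) (\<lambda>_. []) t"
proof (induction t arbitrary: k s)
  case (Lam t)
  have "shift_lsub (\<lambda>i. if i < k then Var i else if i = k then s else Var (i - 1)) =
      (\<lambda>i. if i < Suc k then Var i else if i = Suc k then rename Suc (\<lambda>a. a) s else Var (i - 1))"
    by (rule ext) (simp add: shift_lsub_def split: nat.split)
  then show ?case using Lam by (simp add: lift_l_0)
next
  case (Mu t)
  have "(\<lambda>i. rename (\<lambda>i. i) Suc (if i < k then Var i else if i = k then s else Var (i - 1))) =
      (\<lambda>i. if i < k then Var i else if i = k then rename (\<lambda>i. i) Suc s else Var (i - 1))"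
    by (rule ext) simp
  then show ?case using Mu by (simp add: lift_m_0)
qed simp_all

lemma subst_m_eq_psubst: "subst_m t k v = psubst Var (\<lambda>a. a) (\<lambda>a. if a = k then [v] else []) t"
proof (induction t arbitrary: k v)
  case (Lam t)
  have "shift_lsub Var = Var"
    by (rule ext) (simp add: shift_lsub_def split: nat.split)
  moreover have "(\<lambda>a. map (rename Suc (\<lambda>a. a)) (if a = k then [v] else [])) =
      (\<lambda>a. if a = k then [rename Suc (\<lambda>a. a) v] else [])"
    by auto
  ultimately show ?case using Lam by (simp add: lift_l_0)
next
  case (Mu t)
  have "shift_stacks (\<lambda>a. if a = k then [v] else []) =
      (\<lambda>a. if a = Suc k then [rename (\<lambda>i. i) Suc v] else [])"
    by (rule ext) (simp add: shift_stacks_def split: nat.split)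
  then show ?case using Mu by (simp add: lift_m_0)
qed simp_all

lemma mu_bind_eq_rename:
  "mu_bind a d t = rename (\<lambda>i. i) (\<lambda>b. if b < d then b else if b - d = a then d else Suc b) t"
proof (induction t arbitrary: d)
  case (Mu t)
  have "shift_ren (\<lambda>b. if b < d then b else if b - d = a then d else Suc b) =
      (\<lambda>b. if b < Suc d then b else if b - Suc d = a then Suc d else Suc b)"
    by (rule ext) (simp add: shift_ren_def split: nat.split)
  then show ?case using Mu by simp
qed simp_all

lemma mu_bind_0: "mu_bind a 0 t = rename (\<lambda>i. i) (\<lambda>b. if b = a then 0 else Suc b) t"
  by (simp add: mu_bind_eq_rename)

section \<open>Reduction\<close>

lemma red_refl [simp]: "red t t"
  by (simp add: red_def)

lemma red1_imp_red: "red1 t u \<Longrightarrow> red t u"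
  by (simp add: red_def)

lemma red_trans: "red t u \<Longrightarrow> red u v \<Longrightarrow> red t v"
  by (simp add: red_def)

lemma red_compatible:
  assumes "\<And>t u. red1 t u \<Longrightarrow> red1 (F t) (F u)" and "red t u"
  shows "red (F t) (F u)"
  using assms(2) unfolding red_def
  by (induction rule: rtranclp_induct) (auto intro: rtranclp.rtrancl_into_rtrancl assms(1))

lemma red_App_left: "red t u \<Longrightarrow> red (App t v) (App u v)"
  by (rule red_compatible[where F = "\<lambda>t. App t v"]) (auto intro: red1.appL)

lemma red_Mu: "red t u \<Longrightarrow> red (Mu t) (Mu u)"
  by (rule red_compatible[where F = Mu]) (auto intro: red1.muC)

lemma red_Nam: "red t u \<Longrightarrow> red (Nam a t) (Nam a u)"
  by (rule red_compatible[where F = "Nam a"]) (auto intro: red1.nam)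

lemma red_app_list: "red t u \<Longrightarrow> red (app_list t vs) (app_list u vs)"
  by (induction vs arbitrary: t u) (auto intro: red_App_left)

lemma red_apps: "red t u \<Longrightarrow> red (apps t ys) (apps u ys)"
  by (simp add: apps_eq_app_list red_app_list)

lemma red1_rename: "red1 t u \<Longrightarrow> red1 (rename r g t) (rename r g u)"
proof (induction arbitrary: r g rule: red1.induct)
  case (beta u v)
  have "rename r g (subst_l u 0 v) = subst_l (rename (shift_ren r) g u) 0 (rename r g v)"
    unfolding subst_l_eq_psubst
    by (simp add: rename_psubst psubst_rename, rule arg_cong[where f = "\<lambda>s. psubst s _ _ _"])
      (auto simp: shift_ren_def split: nat.split)
  then show ?case using red1.beta[of "rename (shift_ren r) g u" "rename r g v"] by simp
next
  case (mu u v)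
  have "rename r (shift_ren g) (subst_m u 0 (lift_m 0 v)) =
      subst_m (rename r (shift_ren g) u) 0 (lift_m 0 (rename r g v))"
    unfolding subst_m_eq_psubst lift_m_0
    by (simp add: rename_psubst psubst_rename rename_rename,
        rule arg_cong[where f = "\<lambda>p. psubst _ _ p _"]) (auto simp: rename_rename)
  then show ?case using red1.mu[of "rename r (shift_ren g) u" "rename r g v"] by simp
qed (auto intro: red1.intros)

lemma red_rename: "red t u \<Longrightarrow> red (rename r g t) (rename r g u)"
  by (rule red_compatible[where F = "rename r g"]) (rule red1_rename)

lemma subst_l_psubst_shift:
  "subst_l (psubst (shift_lsub s) f (\<lambda>a. map (rename Suc (\<lambda>a. a)) (p a)) t) 0 u =
     psubst (case_nat u s) f p t"
  unfolding subst_l_eq_psubst psubst_psubst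
  by (rule arg_cong3[where f = "\<lambda>s f p. psubst s f p t"])
    (auto simp: shift_lsub_def psubst_rename psubst_Var comp_def split: nat.split)

lemma subst_m_psubst_shift:
  "subst_m (psubst (\<lambda>i. rename (\<lambda>i. i) Suc (s i)) (shift_ren f)
       (\<lambda>a. map (rename (\<lambda>i. i) Suc) (q a)) t) 0 (lift_m 0 v) =
     psubst (\<lambda>i. rename (\<lambda>i. i) Suc (s i)) (shift_ren f)
       (\<lambda>a. map (rename (\<lambda>i. i) Suc) ((q(0 := q 0 @ [v])) a)) t"
proof -
  have unaffected: "psubst Var (\<lambda>a. a) (\<lambda>a. if a = 0 then [w] else []) (rename (\<lambda>i. i) Suc u) =
      rename (\<lambda>i. i) Suc u" for u w
    by (subst psubst_rename) (simp add: rename_eq_psubst)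
  show ?thesis
    unfolding subst_m_eq_psubst lift_m_0 psubst_psubst
    by (rule arg_cong3[where f = "\<lambda>s f p. psubst s f p t"]) (auto simp: unaffected comp_def)
qed

text \<open>A \<open>\<mu>\<close>-abstraction swallows its arguments one by one into the stack of its bound name.\<close>

lemma red_app_list_Mu:
  "red (app_list (Mu (psubst (\<lambda>i. rename (\<lambda>i. i) Suc (s i)) (shift_ren f)
          (\<lambda>a. map (rename (\<lambda>i. i) Suc) (q a)) t)) pi)
       (Mu (psubst (\<lambda>i. rename (\<lambda>i. i) Suc (s i)) (shift_ren f)
          (\<lambda>a. map (rename (\<lambda>i. i) Suc) ((q(0 := q 0 @ pi)) a)) t))"
proof (induction pi arbitrary: q)
  case (Cons v pi)
  have "red (app_list (Mu (psubst (\<lambda>i. rename (\<lambda>i. i) Suc (s i)) (shift_ren f)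
          (\<lambda>a. map (rename (\<lambda>i. i) Suc) (q a)) t)) (v # pi))
       (app_list (Mu (psubst (\<lambda>i. rename (\<lambda>i. i) Suc (s i)) (shift_ren f)
          (\<lambda>a. map (rename (\<lambda>i. i) Suc) ((q(0 := q 0 @ [v])) a)) t)) pi)"
    unfolding app_list_simps(2) subst_m_psubst_shift[symmetric]
    by (intro red_app_list red1_imp_red red1.mu)
  moreover have "(q(0 := q 0 @ [v]))(0 := (q(0 := q 0 @ [v])) 0 @ pi) = q(0 := q 0 @ v # pi)"
    by simp
  ultimately show ?case
    using Cons.IH[of "q(0 := q 0 @ [v])"] by (simp only:) (rule red_trans)
qed simp

lemma red_mu_red: "\<lbrakk>red t u; red_mu u c\<rbrakk> \<Longrightarrow> red_mu t c"
  unfolding red_mu_def by (blast intro: red_trans)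

lemma red_mu_Nam: "red_mu t c \<Longrightarrow> red_mu (Nam a t) c"
  unfolding red_mu_def by (blast intro: red_Nam Mset.nam_w)

lemma red_mu_Mu: "red_mu t c \<Longrightarrow> red_mu (Mu (mu_bind a 0 t)) c"
  unfolding red_mu_def mu_bind_0 by (blast intro: red_Mu red_rename Mset.mu_w[unfolded mu_bind_0])

lemma red_mu_self: "red_mu t t"
  unfolding red_mu_def using Mset.base red_refl by blast

section \<open>Free variables\<close>

fun fv_lam :: "trm \<Rightarrow> nat set" where
  "fv_lam (Var i) = {i}"
| "fv_lam (Lam t) = {i. Suc i \<in> fv_lam t}"
| "fv_lam (App t u) = fv_lam t \<union> fv_lam u"
| "fv_lam (Mu t) = fv_lam t"
| "fv_lam (Nam a t) = fv_lam t"

fun fv_mu :: "trm \<Rightarrow> nat set" where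
  "fv_mu (Var i) = {}"
| "fv_mu (Lam t) = fv_mu t"
| "fv_mu (App t u) = fv_mu t \<union> fv_mu u"
| "fv_mu (Mu t) = {a. Suc a \<in> fv_mu t}"
| "fv_mu (Nam a t) = insert a (fv_mu t)"

lemma finite_Suc_preimage: "finite S \<Longrightarrow> finite {i. Suc i \<in> S}"
  using finite_vimageI[of S Suc] by (simp add: vimage_def)

lemma finite_fv_lam: "finite (fv_lam t)"
  by (induction t) (simp_all add: finite_Suc_preimage)

lemma finite_fv_mu: "finite (fv_mu t)"
  by (induction t) (simp_all add: finite_Suc_preimage)

lemma rename_cong_fv:
  "\<lbrakk>\<forall>i\<in>fv_lam t. r i = r' i; \<forall>a\<in>fv_mu t. g a = g' a\<rbrakk> \<Longrightarrow> rename r g t = rename r' g' t"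
proof (induction t arbitrary: r g r' g')
  case (Lam t)
  have "\<forall>i\<in>fv_lam t. shift_ren r i = shift_ren r' i"
    using Lam.prems(1) by (auto simp: shift_ren_def split: nat.split)
  then show ?case using Lam by simp
next
  case (Mu t)
  have "\<forall>a\<in>fv_mu t. shift_ren g a = shift_ren g' a"
    using Mu.prems(2) by (auto simp: shift_ren_def split: nat.split)
  then show ?case using Mu by simp
qed simp_all

lemma psubst_cong_fv:
  "\<lbrakk>\<forall>i\<in>fv_lam t. s i = s' i; \<forall>a\<in>fv_mu t. f a = f' a \<and> p a = p' a\<rbrakk> \<Longrightarrow>
     psubst s f p t = psubst s' f' p' t"
proof (induction t arbitrary: s f p s' f' p')
  case (Lam t)
  have "\<forall>i\<in>fv_lam t. shift_lsub s i = shift_lsub s' i"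
    using Lam.prems(1) by (auto simp: shift_lsub_def split: nat.split)
  then show ?case using Lam by simp
next
  case (Mu t)
  have "\<forall>a\<in>fv_mu t. shift_ren f a = shift_ren f' a \<and> shift_stacks p a = shift_stacks p' a"
    using Mu.prems(2) by (auto simp: shift_ren_def shift_stacks_def split: nat.split)
  then show ?case using Mu by simp
next
  case (Nam a t)
  then have "psubst s f p t = psubst s' f' p' t" by simp
  with Nam.prems show ?case by simp
qed simp_all

lemma rename_Suc_fresh:
  "a \<notin> fv_mu v \<Longrightarrow> rename (\<lambda>i. i) (\<lambda>b. if b = a then 0 else Suc b) v = rename (\<lambda>i. i) Suc v"
  by (rule rename_cong_fv) auto

lemma mu_bind_psubst_fresh:
  assumes "\<forall>i\<in>fv_lam t. a \<notin> fv_mu (s i)"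
    and "\<forall>c. Suc c \<in> fv_mu t \<longrightarrow> f c \<noteq> a \<and> (\<forall>v\<in>set (p c). a \<notin> fv_mu v)"
    and "\<forall>v\<in>set pi. a \<notin> fv_mu v"
  shows "mu_bind a 0 (psubst s (case_nat a f) (case_nat pi p) t) =
    psubst (\<lambda>i. rename (\<lambda>i. i) Suc (s i)) (shift_ren f)
      (\<lambda>b. map (rename (\<lambda>i. i) Suc) (case_nat pi p b)) t"
  unfolding mu_bind_0 rename_psubst
proof (rule psubst_cong_fv)
  show "\<forall>i\<in>fv_lam t. rename (\<lambda>i. i) (\<lambda>b. if b = a then 0 else Suc b) (s i) = rename (\<lambda>i. i) Suc (s i)"
    using assms(1) by (simp add: rename_Suc_fresh)
  show "\<forall>b\<in>fv_mu t. (if case_nat a f b = a then 0 else Suc (case_nat a f b)) = shift_ren f b \<and>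
      map (rename (\<lambda>i. i) (\<lambda>b. if b = a then 0 else Suc b)) (case_nat pi p b) =
      map (rename (\<lambda>i. i) Suc) (case_nat pi p b)"
  proof
    fix b assume "b \<in> fv_mu t"
    then show "(if case_nat a f b = a then 0 else Suc (case_nat a f b)) = shift_ren f b \<and>
      map (rename (\<lambda>i. i) (\<lambda>b. if b = a then 0 else Suc b)) (case_nat pi p b) =
      map (rename (\<lambda>i. i) Suc) (case_nat pi p b)"
      using assms(2,3) by (cases b) (auto simp: rename_Suc_fresh)
  qed
qed

section \<open>Truth values over a pole of plays\<close>

locale play_semantics =
  fixes x :: nat and ys :: "nat list" and z :: "nat \<Rightarrow> nat"
begin

inductive good :: "nat \<Rightarrow> trm \<Rightarrow> bool" where
  answer: "\<lbrakk>1 \<le> l; l \<le> n; red_mu w (apps (Var (z l)) ys)\<rbrakk> \<Longrightarrow> good n w"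
| question: "\<lbrakk>red_mu w (apps (App (Var x) \<theta>) ys); good (Suc n) (App \<theta> (Var (z (Suc n))))\<rbrakk>
    \<Longrightarrow> good n w"

definition pole :: "nat \<Rightarrow> trm set" where
  "pole n = {w. \<forall>m\<ge>n. good m w}"

fun truth_val :: "ty \<Rightarrow> nat \<Rightarrow> trm set" where
  "truth_val (PV _) n = {t. apps t ys \<in> pole n}"
| "truth_val Bot n = pole n"
| "truth_val (Arr A B) n = {t. \<forall>m\<ge>n. \<forall>u\<in>truth_val A m. App t u \<in> truth_val B m}"

fun falsity_val :: "ty \<Rightarrow> nat \<Rightarrow> trm list set" where
  "falsity_val (PV _) n = {map Var ys}"
| "falsity_val Bot n = {[]}"
| "falsity_val (Arr A B) n = {u # pi | u pi. u \<in> truth_val A n \<and> pi \<in> falsity_val B n}"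

lemma pole_mono: "\<lbrakk>n \<le> m; w \<in> pole n\<rbrakk> \<Longrightarrow> w \<in> pole m"
  by (auto simp: pole_def)

lemma truth_val_mono: "\<lbrakk>n \<le> m; t \<in> truth_val A n\<rbrakk> \<Longrightarrow> t \<in> truth_val A m"
  by (induction A) (auto intro: pole_mono)

lemma falsity_val_mono: "\<lbrakk>n \<le> m; pi \<in> falsity_val A n\<rbrakk> \<Longrightarrow> pi \<in> falsity_val A m"
  by (induction A arbitrary: pi) (auto intro: truth_val_mono)

lemma good_red_mu_mono: "\<lbrakk>good n w; \<And>c. red_mu w c \<Longrightarrow> red_mu w' c\<rbrakk> \<Longrightarrow> good n w'"
  by (erule good.cases) (blast intro: good.intros)+

lemma pole_red_mu_mono: "\<lbrakk>w \<in> pole n; \<And>c. red_mu w c \<Longrightarrow> red_mu w' c\<rbrakk> \<Longrightarrow> w' \<in> pole n"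
  unfolding pole_def by (blast intro: good_red_mu_mono)

lemma pole_red: "\<lbrakk>w' \<in> pole n; red w w'\<rbrakk> \<Longrightarrow> w \<in> pole n"
  by (blast intro: pole_red_mu_mono red_mu_red)

lemma truth_val_red: "\<lbrakk>t' \<in> truth_val A n; red t t'\<rbrakk> \<Longrightarrow> t \<in> truth_val A n"
proof (induction A arbitrary: t t' n)
  case (Arr A B)
  then show ?case by simp (meson red_App_left)
qed (auto intro: pole_red red_apps)

lemma app_list_truth_falsity: "\<lbrakk>t \<in> truth_val A n; pi \<in> falsity_val A n\<rbrakk> \<Longrightarrow> app_list t pi \<in> pole n"
proof (induction A arbitrary: t pi)
  case (Arr A B)
  then show ?case by auto
qed (simp_all add: apps_eq_app_list)

lemma truth_valI: "(\<And>m pi. \<lbrakk>n \<le> m; pi \<in> falsity_val A m\<rbrakk> \<Longrightarrow> app_list t pi \<in> pole m) \<Longrightarrow> t \<in> truth_val A n"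
proof (induction A arbitrary: t n)
  case (Arr A B)
  show ?case
  proof (simp, intro allI impI ballI)
    fix m u assume "n \<le> m" and u: "u \<in> truth_val A m"
    show "App t u \<in> truth_val B m"
    proof (rule Arr.IH(2))
      fix m' pi assume "m \<le> m'" and "pi \<in> falsity_val B m'"
      with \<open>n \<le> m\<close> u have "app_list t (u # pi) \<in> pole m'"
        by (intro Arr.prems) (auto intro: truth_val_mono)
      then show "app_list (App t u) pi \<in> pole m'" by simp
    qed
  qed
qed (simp_all add: apps_eq_app_list)

lemma pole_Nam: "w \<in> pole n \<Longrightarrow> Nam a w \<in> pole n"
  by (blast intro: pole_red_mu_mono red_mu_Nam)

lemma pole_Mu: "w \<in> pole n \<Longrightarrow> Mu (mu_bind a 0 w) \<in> pole n"
  by (blast intro: pole_red_mu_mono red_mu_Mu)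

lemma adequacy:
  "\<lbrakk>typing \<Gamma> \<Delta> t A; \<forall>i<length \<Gamma>. s i \<in> truth_val (\<Gamma> ! i) n;
    \<forall>a<length \<Delta>. p a \<in> falsity_val (\<Delta> ! a) n\<rbrakk> \<Longrightarrow> psubst s f p t \<in> truth_val A n"
proof (induction arbitrary: s f p n rule: typing.induct)
  case (arr_i A \<Gamma> \<Delta> t B)
  show ?case
  proof (simp only: psubst.simps truth_val.simps, intro CollectI allI impI ballI)
    fix m u assume m: "n \<le> m" and u: "u \<in> truth_val A m"
    have "case_nat u s i \<in> truth_val ((A # \<Gamma>) ! i) m" if "i < length (A # \<Gamma>)" for i
      using that arr_i.prems(1) m u by (cases i) (auto intro: truth_val_mono)
    moreover have "\<forall>a<length \<Delta>. p a \<in> falsity_val (\<Delta> ! a) m"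
      using arr_i.prems(2) m by (auto intro: falsity_val_mono)
    ultimately have "psubst (case_nat u s) f p t \<in> truth_val B m"
      using arr_i.IH by blast
    moreover have "red (App (Lam (psubst (shift_lsub s) f (\<lambda>a. map (rename Suc (\<lambda>a. a)) (p a)) t)) u)
        (psubst (case_nat u s) f p t)"
      by (rule red1_imp_red, subst subst_l_psubst_shift[symmetric]) (rule red1.beta)
    ultimately show "App (Lam (psubst (shift_lsub s) f (\<lambda>a. map (rename Suc (\<lambda>a. a)) (p a)) t)) u
        \<in> truth_val B m"
      by (rule truth_val_red)
  qed
next
  case (arr_e \<Gamma> \<Delta> u A B v)
  have "psubst s f p u \<in> truth_val (Arr A B) n" and "psubst s f p v \<in> truth_val A n"
    using arr_e.IH arr_e.prems by blast+
  then show ?case by auto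
next
  case (mu_i \<Gamma> A \<Delta> t)
  let ?s' = "\<lambda>i. rename (\<lambda>i. i) Suc (s i)"
  show ?case
  proof (simp only: psubst.simps, rule truth_valI)
    fix m pi assume m: "n \<le> m" and pi: "pi \<in> falsity_val A m"
    \<comment> \<open>Open the binder with a fresh free \<open>\<mu>\<close>-name \<open>a\<close> whose stack is \<open>pi\<close>; then the IH applies.\<close>
    define F where "F = (\<Union>i\<in>fv_lam t. fv_mu (s i)) \<union> f ` {c. Suc c \<in> fv_mu t}
      \<union> (\<Union>c\<in>{c. Suc c \<in> fv_mu t}. \<Union>v\<in>set (p c). fv_mu v) \<union> (\<Union>v\<in>set pi. fv_mu v)"
    have "finite F"
      unfolding F_def by (simp add: finite_fv_lam finite_fv_mu finite_Suc_preimage)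
    then obtain a where fresh: "a \<notin> F"
      using ex_new_if_finite[OF infinite_UNIV_nat] by auto
    have "\<forall>i<length \<Gamma>. s i \<in> truth_val (\<Gamma> ! i) m"
      using mu_i.prems(1) m by (auto intro: truth_val_mono)
    moreover have "\<forall>b<length (A # \<Delta>). case_nat pi p b \<in> falsity_val ((A # \<Delta>) ! b) m"
    proof (intro allI impI)
      fix b assume "b < length (A # \<Delta>)"
      then show "case_nat pi p b \<in> falsity_val ((A # \<Delta>) ! b) m"
        using mu_i.prems(2) m pi by (cases b) (auto intro: falsity_val_mono)
    qed
    ultimately have "psubst s (case_nat a f) (case_nat pi p) t \<in> pole m"
      using mu_i.IH by simp
    then have "Mu (mu_bind a 0 (psubst s (case_nat a f) (case_nat pi p) t)) \<in> pole m"
      by (rule pole_Mu)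
    also have "mu_bind a 0 (psubst s (case_nat a f) (case_nat pi p) t) =
        psubst ?s' (shift_ren f) (\<lambda>b. map (rename (\<lambda>i. i) Suc) (case_nat pi p b)) t"
      using fresh unfolding F_def by (intro mu_bind_psubst_fresh) auto
    finally have in_pole: "Mu (psubst ?s' (shift_ren f)
        (\<lambda>b. map (rename (\<lambda>i. i) Suc) (case_nat pi p b)) t) \<in> pole m" .
    have "(case_nat [] p)(0 := case_nat [] p 0 @ pi) = case_nat pi p"
      by (rule ext) (simp split: nat.split)
    then have "red (app_list (Mu (psubst ?s' (shift_ren f) (shift_stacks p) t)) pi)
        (Mu (psubst ?s' (shift_ren f) (\<lambda>b. map (rename (\<lambda>i. i) Suc) (case_nat pi p b)) t))"
      using red_app_list_Mu[of s f "case_nat [] p" t pi] by (simp only: shift_stacks_eq)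
    with in_pole show "app_list (Mu (psubst ?s' (shift_ren f) (shift_stacks p) t)) pi \<in> pole m"
      by (rule pole_red)
  qed
next
  case (bot_i a \<Delta> \<Gamma> t)
  then have "app_list (psubst s f p t) (p a) \<in> pole n"
    by (intro app_list_truth_falsity) blast+
  then show ?case by (simp add: pole_Nam)
qed simp

text \<open>The answer \<open>z\<^sub>n\<^sub>+\<^sub>1\<close> becomes admissible at round \<open>n + 1\<close>: this is what makes \<open>x\<close> a realizer of \<open>\<not>X \<rightarrow> X\<close>.\<close>

lemma Var_x_realizer: "Var x \<in> truth_val (Arr (neg (PV X)) (PV X)) 0"
  unfolding truth_val.simps(3)
proof (intro CollectI allI impI ballI)
  fix m \<theta> assume \<theta>: "\<theta> \<in> truth_val (neg (PV X)) m"
  show "App (Var x) \<theta> \<in> truth_val (PV X) m"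
    unfolding truth_val.simps pole_def
  proof (intro CollectI allI impI)
    fix n assume "m \<le> n"
    have "Var (z (Suc n)) \<in> truth_val (PV X) (Suc n)"
      by (auto simp: pole_def intro!: good.answer[of "Suc n"] red_mu_self)
    with \<theta> \<open>m \<le> n\<close> have "App \<theta> (Var (z (Suc n))) \<in> pole (Suc n)"
      by (simp add: neg_def)
    then have "good (Suc n) (App \<theta> (Var (z (Suc n))))"
      by (simp add: pole_def)
    then show "good n (apps (App (Var x) \<theta>) ys)"
      by (rule good.question[OF red_mu_self])
  qed
qed

lemma good_start:
  assumes "typing [] [] E (Arr (Arr (neg (PV X)) (PV X)) (PV X))"
  shows "good 0 (apps (App E (Var x)) ys)"
proof -
  have "psubst Var (\<lambda>a. a) (\<lambda>_. []) E \<in> truth_val (Arr (Arr (neg (PV X)) (PV X)) (PV X)) 0"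
    by (rule adequacy[OF assms]) simp_all
  with Var_x_realizer have "App E (Var x) \<in> truth_val (PV X) 0"
    by (auto simp: psubst_Var)
  then show ?thesis by (simp add: pole_def)
qed

definition play :: "nat \<Rightarrow> nat \<Rightarrow> (nat \<Rightarrow> trm) \<Rightarrow> trm \<Rightarrow> bool" where
  "play n m \<theta> w \<longleftrightarrow> n < m
     \<and> red_mu w (apps (App (Var x) (\<theta> (Suc n))) ys)
     \<and> (\<forall>k. Suc n \<le> k \<and> k \<le> m - 1 \<longrightarrow>
          red_mu (App (\<theta> k) (Var (z k))) (apps (App (Var x) (\<theta> (Suc k))) ys))
     \<and> (\<exists>l. 1 \<le> l \<and> l \<le> m \<and> red_mu (App (\<theta> m) (Var (z m))) (apps (Var (z l)) ys))"

lemma play_last: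
  "\<lbrakk>red_mu w (apps (App (Var x) \<theta>) ys); 1 \<le> l; l \<le> Suc n;
    red_mu (App \<theta> (Var (z (Suc n)))) (apps (Var (z l)) ys)\<rbrakk> \<Longrightarrow> play n (Suc n) (\<lambda>_. \<theta>) w"
  by (auto simp: play_def)

lemma play_extend:
  assumes "red_mu w (apps (App (Var x) \<theta>') ys)" and "play (Suc n) m \<theta> (App \<theta>' (Var (z (Suc n))))"
  shows "play n m (\<theta>(Suc n := \<theta>')) w"
  unfolding play_def
proof (intro conjI allI impI)
  fix k assume "Suc n \<le> k \<and> k \<le> m - 1"
  then consider "k = Suc n" | "Suc (Suc n) \<le> k \<and> k \<le> m - 1" by linarith
  then show "red_mu (App ((\<theta>(Suc n := \<theta>')) k) (Var (z k))) (apps (App (Var x) ((\<theta>(Suc n := \<theta>')) (Suc k))) ys)"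
    by cases (use assms(2) in \<open>auto simp: play_def\<close>)
qed (use assms in \<open>auto simp: play_def\<close>)

lemma good_imp_play:
  "good n w \<Longrightarrow> (\<exists>l. 1 \<le> l \<and> l \<le> n \<and> red_mu w (apps (Var (z l)) ys)) \<or> (\<exists>m \<theta>. play n m \<theta> w)"
proof (induction rule: good.induct)
  case (question w \<theta> n)
  then show ?case by (blast intro: play_last play_extend)
qed blast

end

theorem mainTheorem9:
  fixes E :: trm and X :: nat and x :: nat and ys :: "nat list" and z :: "nat \<Rightarrow> nat"
  assumes "closed E"
    and "typing [] [] E (Arr (Arr (neg (PV X)) (PV X)) (PV X))"
    and "\<forall>i\<ge>1. x \<noteq> z i"
    and "\<forall>y\<in>set ys. \<forall>i\<ge>1. y \<noteq> z i"
  shows "\<exists>m\<ge>1. \<exists>\<theta> :: nat \<Rightarrow> trm.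
           red_mu (apps (App E (Var x)) ys) (apps (App (Var x) (\<theta> 1)) ys)
         \<and> (\<forall>k. 1 \<le> k \<and> k \<le> m - 1 \<longrightarrow>
               red_mu (App (\<theta> k) (Var (z k))) (apps (App (Var x) (\<theta> (Suc k))) ys))
         \<and> (\<exists>l. 1 \<le> l \<and> l \<le> m \<and> red_mu (App (\<theta> m) (Var (z m))) (apps (Var (z l)) ys))"
proof -
  have "play_semantics.good x ys z 0 (apps (App E (Var x)) ys)"
    using assms(2) by (rule play_semantics.good_start)
  then obtain m \<theta> where "play_semantics.play x ys z 0 m \<theta> (apps (App E (Var x)) ys)"
    using play_semantics.good_imp_play by fastforce
  then show ?thesis
    unfolding play_semantics.play_def One_nat_def[symmetric] by (intro exI[of _ m]) auto
qed

end
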